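(* Let $q\ge2$, $\mathcal{S}$ an SLP deriving $T$ with $|T|\ge q$, and $\phi$ a fingerprint function that is collision free on the substrings of length $q-1$ of $T$ (i.e. for any two length-$(q-1)$ substrings $u,v$ of $T$, $\phi(u)=\phi(v)$ iff $u=v$). Let $G$ be the graph constructed from $\mathcal{S}$ by inserting relevant substrings, and let $C$ be the CS-tree built from $G$, both as described in the context. Then $C$ contains each distinct q-gram of $T$ exactly once, i.e., for each distinct q-gram $s$ of $T$ there is exactly one downward path of $q$ edges in $C$ whose edge labels, read from top to bottom, spell $s$.
   Context: Strings are 0-indexed; $s[i:j]$ is the substring from position $i$ to $j$ inclusive. An SLP is a set of rules $X_1,\dots,X_n$, each $X_i=a$ or $X_i=X_lX_r$ ($l,r<i$); $t_{X_i}$ is the derived string, $|X_i|=|t_{X_i}|$, $T=t_{X_n}$; $occ(X_i)$ is the number of occurrences of $X_i$ in the derivation tree. For $X_i=X_lX_r$ with $|X_i|\ge q$, $r_{X_i}=t_{X_i}[\max(0,|X_l|-q+1):\min(|X_l|+q-2,|X_i|-1)]$. Construction of $G$: start with an empty directed graph whose nodes are keyed by fingerprints. For each rule $X_i=X_lX_r$ with $|X_i|\ge q$ (any order), with $r=r_{X_i}$: create node $\phi(r[0:q-2])$ if absent; for $j=1,\dots,|r|-q+1$, create node $\phi(r[j:j+q-2])$ if absent, create an edge labelled $r[j+q-2]$ with counter $0$ from node $\phi(r[j-1:j+q-3])$ to node $\phi(r[j:j+q-2])$ if no edge in that direction between them exists, and add $occ(X_i)$ to its counter. The start node is the node labelled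 $\phi(T[0:q-2])$. Construction of the CS-tree $C$ (a rooted tree with characters on edges): create a path of $q-1$ edges from a root $u_0$ down to $u_{q-1}$, the edge $u_{j-1}\to u_j$ labelled $T[j-1]$; $u_{q-1}$ corresponds to the start node of $G$ and gets its label. Do a depth-first traversal of $G$ from the start node along directed edges; when exploring an edge of $G$ from node $x$ (with tree node $\tau(x)$) to node $y$ having label $c$ and counter $m$: if $y$ is unvisited, create a tree node $\tau(y)$ as a child of $\tau(x)$ via an edge labelled $c$ with counter $m$, give $\tau(y)$ the fingerprint label of $y$, and continue the traversal from $y$; if $y$ was already visited, create a new leaf child of $\tau(x)$ via an edge labelled $c$ with counter $m$, labelled with the fingerprint label of $y$.
   Formalization: The SLP $\mathcal{S}$ satisfies $occ(X_i)>0$ for every rule $X_i$, that is, every rule of $\mathcal{S}$ occurs in the derivation tree of $T$. The paper assumes this as well. *)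

theory Defs
  imports Main
begin

text \<open>Strings are lists, 0-indexed. substr s i j is s[i:j] (inclusive).\<close>
definition substr :: "'a list \<Rightarrow> nat \<Rightarrow> nat \<Rightarrow> 'a list" where
  "substr s i j = take (Suc j - i) (drop i s)"

text \<open>SLP rules X_0,...,X_{n-1} (0-based); X_i = a or X_i = X_l X_r with l,r < i.\<close>
datatype 'a rule = RTerm 'a | RPair nat nat

definition slp_wf :: "'a rule list \<Rightarrow> bool" where
  "slp_wf rs \<longleftrightarrow> rs \<noteq> [] \<and>
     (\<forall>i < length rs. \<forall>l r. rs ! i = RPair l r \<longrightarrow> l < i \<and> r < i)"

function deriv :: "'a rule list \<Rightarrow> nat \<Rightarrow> 'a list" where
  "deriv rs i = (if i < length rs then
      (case rs ! i of RTerm a \<Rightarrow> [a]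
       | RPair l r \<Rightarrow> if l < i \<and> r < i then deriv rs l @ deriv rs r else [])
     else [])"
  by pat_completeness auto
termination by (relation "measure snd") auto

declare deriv.simps[simp del]

definition slp_T :: "'a rule list \<Rightarrow> 'a list" where
  "slp_T rs = deriv rs (length rs - 1)"

function occ_in :: "'a rule list \<Rightarrow> nat \<Rightarrow> nat \<Rightarrow> nat" where
  "occ_in rs j i = (if j < length rs then
      (if j = i then 1 else 0) +
      (case rs ! j of RTerm a \<Rightarrow> 0
       | RPair l r \<Rightarrow> if l < j \<and> r < j then occ_in rs l i + occ_in rs r i else 0)
     else 0)"
  by pat_completeness auto
termination by (relation "measure (\<lambda>(rs, j, i). j)") auto

declare occ_in.simps[simp del]

definition occ :: "'a rule list \<Rightarrow> nat \<Rightarrow> nat" where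
  "occ rs i = occ_in rs (length rs - 1) i"

text \<open>r_{X_i} for X_i = X_l X_r:
  t_{X_i}[max(0,|X_l|-q+1) : min(|X_l|+q-2, |X_i|-1)].\<close>
definition rstr :: "'a rule list \<Rightarrow> nat \<Rightarrow> nat \<Rightarrow> 'a list" where
  "rstr rs q i = (case rs ! i of RTerm a \<Rightarrow> []
     | RPair l r \<Rightarrow> (let t = deriv rs i; a = length (deriv rs l) in
          substr t (a + 1 - q) (min (a + q - 2) (length t - 1))))"

text \<open>Nodes: set of fingerprints; edges: map from (source,target) to (label, counter).\<close>
type_synonym ('a, 'f) graph = "'f set \<times> ('f \<times> 'f \<Rightarrow> ('a \<times> nat) option)"

definition add_edge :: "('a, 'f) graph \<Rightarrow> 'f \<Rightarrow> 'f \<Rightarrow> 'a \<Rightarrow> nat \<Rightarrow> ('a, 'f) graph" where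
  "add_edge G u v c m = (let (N, E) = G in
     (insert v N,
      (case E (u, v) of None \<Rightarrow> E((u, v) \<mapsto> (c, m))
       | Some (c', k) \<Rightarrow> E((u, v) \<mapsto> (c', k + m)))))"

definition process_r ::
  "('a list \<Rightarrow> 'f) \<Rightarrow> nat \<Rightarrow> 'a list \<Rightarrow> nat \<Rightarrow> ('a, 'f) graph \<Rightarrow> ('a, 'f) graph" where
  "process_r \<phi> q r m G =
     foldl (\<lambda>G' j. add_edge G' (\<phi> (substr r (j - 1) (j + q - 3))) (\<phi> (substr r j (j + q - 2)))
                      (r ! (j + q - 2)) m)
       (fst G \<union> {\<phi> (substr r 0 (q - 2))}, snd G)
       [1..<length r + 2 - q]"

definition valid_order :: "'a rule list \<Rightarrow> nat \<Rightarrow> nat list \<Rightarrow> bool" where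
  "valid_order rs q ord \<longleftrightarrow> distinct ord \<and>
     set ord = {i. i < length rs \<and> (\<exists>l r. rs ! i = RPair l r) \<and> q \<le> length (deriv rs i)}"

definition build_G :: "('a list \<Rightarrow> 'f) \<Rightarrow> nat \<Rightarrow> 'a rule list \<Rightarrow> nat list \<Rightarrow> ('a, 'f) graph" where
  "build_G \<phi> q rs ord = foldl (\<lambda>G i. process_r \<phi> q (rstr rs q i) (occ rs i) G) ({}, Map.empty) ord"

text \<open>Tree nodes are 0..<tn (0 is the root); tedges holds (parent, label, child);
  tcnt gives the counter of the edge entering a node; tlab the fingerprint label.
  vis maps visited graph nodes to their tree node tau; stk is the DFS stack;
  expl the set of already explored graph edges.\<close>
record ('a, 'f) dfs_state =
  tn :: nat
  tedges :: "(nat \<times> 'a \<times> nat) set"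
  tcnt :: "nat \<Rightarrow> nat option"
  tlab :: "nat \<Rightarrow> 'f option"
  vis :: "'f \<Rightarrow> nat option"
  stk :: "('f \<times> nat) list"
  expl :: "('f \<times> 'f) set"

definition dfs_init :: "('a list \<Rightarrow> 'f) \<Rightarrow> nat \<Rightarrow> 'a list \<Rightarrow> ('a, 'f) dfs_state" where
  "dfs_init \<phi> q T =
     \<lparr> tn = q,
       tedges = {(j - 1, T ! (j - 1), j) | j. 1 \<le> j \<and> j \<le> q - 1},
       tcnt = Map.empty,
       tlab = [q - 1 \<mapsto> \<phi> (substr T 0 (q - 2))],
       vis = [\<phi> (substr T 0 (q - 2)) \<mapsto> q - 1],
       stk = [(\<phi> (substr T 0 (q - 2)), q - 1)],
       expl = {} \<rparr>"

inductive dfs_step :: "('f \<times> 'f \<Rightarrow> ('a \<times> nat) option) \<Rightarrow> ('a, 'f) dfs_state \<Rightarrow> ('a, 'f) dfs_state \<Rightarrow> bool"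
  for E where
  tree_edge: "\<lbrakk> stk S = (x, tx) # rest; E (x, y) = Some (c, m); (x, y) \<notin> expl S; vis S y = None \<rbrakk>
    \<Longrightarrow> dfs_step E S
         (S\<lparr> tn := Suc (tn S), tedges := insert (tx, c, tn S) (tedges S),
             tcnt := (tcnt S)(tn S \<mapsto> m), tlab := (tlab S)(tn S \<mapsto> y),
             vis := (vis S)(y \<mapsto> tn S), stk := (y, tn S) # (x, tx) # rest,
             expl := insert (x, y) (expl S) \<rparr>)"
| leaf_edge: "\<lbrakk> stk S = (x, tx) # rest; E (x, y) = Some (c, m); (x, y) \<notin> expl S; vis S y \<noteq> None \<rbrakk>
    \<Longrightarrow> dfs_step E S
         (S\<lparr> tn := Suc (tn S), tedges := insert (tx, c, tn S) (tedges S),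
             tcnt := (tcnt S)(tn S \<mapsto> m), tlab := (tlab S)(tn S \<mapsto> y),
             expl := insert (x, y) (expl S) \<rparr>)"
| finish: "\<lbrakk> stk S = (x, tx) # rest; \<forall>y. E (x, y) \<noteq> None \<longrightarrow> (x, y) \<in> expl S \<rbrakk>
    \<Longrightarrow> dfs_step E S (S\<lparr> stk := rest \<rparr>)"

definition qgrams :: "nat \<Rightarrow> 'a list \<Rightarrow> 'a list set" where
  "qgrams q T = {substr T i (i + q - 1) | i. i + q \<le> length T}"

definition collision_free :: "('a list \<Rightarrow> 'f) \<Rightarrow> nat \<Rightarrow> 'a list \<Rightarrow> bool" where
  "collision_free \<phi> q T \<longleftrightarrow>
     (\<forall>u \<in> qgrams (q - 1) T. \<forall>v \<in> qgrams (q - 1) T. \<phi> u = \<phi> v \<longleftrightarrow> u = v)"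

definition is_path :: "(nat \<times> 'a \<times> nat) set \<Rightarrow> nat list \<Rightarrow> 'a list \<Rightarrow> bool" where
  "is_path Ed vs s \<longleftrightarrow> length vs = Suc (length s) \<and>
     (\<forall>i < length s. (vs ! i, s ! i, vs ! Suc i) \<in> Ed)"

end

theory Submission
  imports Defs "HOL-Library.Sublist"
begin

text \<open>A q-gram of t_{X} either lies inside one half of X = X_l X_r or crosses the border, and
  then it lies inside r_{X}; hence the q-grams of the relevant substrings are exactly the
  q-grams of T. With a collision-free fingerprint, G is therefore the de Bruijn graph of T:
  one node per (q-1)-gram and, for every q-gram u c, one edge labelled c from the node of u
  to the node of the suffix of u c. The depth-first traversal keeps two invariants: every
  visited graph node x has a tree node reached by a path spelling a (q-1)-gram with
  fingerprint x, and every explored graph edge produced exactly one tree edge below depth q,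
  from the tree node of its source. All (q-1)-gram windows of T are reachable from the start
  node, so a finished traversal has explored every edge, and the tree path ending in the
  corresponding tree edge spells the q-gram. It is unique because tree nodes have unique
  parents and the children created from one node carry pairwise distinct graph nodes.\<close>

section \<open>q-grams of the derived text\<close>

lemma qgrams_conv_take_drop:
  assumes "1 \<le> k"
  shows "qgrams k T = {take k (drop i T) | i. i + k \<le> length T}"
proof -
  have "substr T i (i + k - 1) = take k (drop i T)" for i
    using assms by (simp add: substr_def)
  then show ?thesis unfolding qgrams_def by simp
qed

lemma mem_qgrams_iff:
  assumes "1 \<le> k"
  shows "w \<in> qgrams k T \<longleftrightarrow> length w = k \<and> sublist w T"
proof
  assume "w \<in> qgrams k T"
  then obtain i where "i + k \<le> length T" "w = take k (drop i T)"
    using qgrams_conv_take_drop[OF assms] by blast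
  then show "length w = k \<and> sublist w T"
    by (auto intro: sublist_order.order_trans[OF sublist_take sublist_drop])
next
  assume "length w = k \<and> sublist w T"
  then obtain ps ss where "T = ps @ w @ ss" "length w = k"
    unfolding sublist_def by blast
  then have "w = take k (drop (length ps) T)" "length ps + k \<le> length T" by simp_all
  then show "w \<in> qgrams k T"
    using qgrams_conv_take_drop[OF assms] by blast
qed

lemma qgrams_mono:
  assumes "sublist S T" "1 \<le> k"
  shows "qgrams k S \<subseteq> qgrams k T"
  using assms sublist_order.order_trans by (auto simp: mem_qgrams_iff)

lemma butlast_mem_qgrams:
  "w \<in> qgrams (Suc k) T \<Longrightarrow> 1 \<le> k \<Longrightarrow> butlast w \<in> qgrams k T"
  using sublist_order.order_trans[OF sublist_butlast] by (auto simp: mem_qgrams_iff)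

lemma tl_mem_qgrams:
  "w \<in> qgrams (Suc k) T \<Longrightarrow> 1 \<le> k \<Longrightarrow> tl w \<in> qgrams k T"
  using sublist_order.order_trans[OF sublist_tl] by (auto simp: mem_qgrams_iff)

lemma sublist_substr:
  assumes "t = ps @ w @ ss" "i \<le> length ps" "length ps + length w \<le> Suc j"
  shows "sublist w (substr t i j)"
proof -
  have "substr t i j = drop i ps @ w @ take (Suc j - i - (length ps - i) - length w) ss"
    using assms by (simp add: substr_def)
  then show ?thesis by simp
qed

lemma deriv_RPair:
  "i < length rs \<Longrightarrow> rs ! i = RPair l r \<Longrightarrow> l < i \<Longrightarrow> r < i \<Longrightarrow>
   deriv rs i = deriv rs l @ deriv rs r"
  by (simp add: deriv.simps)

lemma sublist_deriv_if_occ_in: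
  "0 < occ_in rs j i \<Longrightarrow> sublist (deriv rs i) (deriv rs j)"
proof (induction j rule: less_induct)
  case (less j)
  show ?case
  proof (cases "j = i")
    case False
    have "j < length rs" using less.prems by (subst (asm) occ_in.simps) (auto split: if_splits)
    moreover obtain l r where lr: "rs ! j = RPair l r" "l < j" "r < j"
      using less.prems False by (subst (asm) occ_in.simps) (auto split: rule.splits if_splits)
    ultimately have "0 < occ_in rs l i + occ_in rs r i"
                "deriv rs j = deriv rs l @ deriv rs r"
      using less.prems False by (auto simp: occ_in.simps[of rs j] deriv_RPair)
    then show ?thesis
      using less.IH lr sublist_order.order_trans
      by (metis add_gr_0 sublist_append_leftI sublist_append_rightI)
  qed simp
qed

lemma sublist_rstr_deriv: "sublist (rstr rs q i) (deriv rs i)"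
  by (auto simp: rstr_def substr_def Let_def split: rule.split
           intro: sublist_order.order_trans[OF sublist_take sublist_drop])

lemma qgram_sublist_rstr:
  assumes "sublist w (deriv rs j)" "length w = q" "2 \<le> q"
  shows "\<exists>i < length rs. (\<exists>l r. rs ! i = RPair l r) \<and> q \<le> length (deriv rs i) \<and>
           sublist w (rstr rs q i)"
  using assms(1)
proof (induction j rule: less_induct)
  case (less j)
  have "deriv rs j \<noteq> []" using less.prems assms(2,3) by auto
  then obtain l r where j: "j < length rs" "rs ! j = RPair l r" "l < j" "r < j"
    using assms(2,3) less.prems
    by (auto simp: deriv.simps[of rs j] split: if_splits rule.splits dest: sublist_length_le)
  define A where "A = deriv rs l"
  have dj: "deriv rs j = A @ deriv rs r" unfolding A_def using deriv_RPair j by blast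
  then consider "sublist w A" | "sublist w (deriv rs r)"
    | w1 w2 where "w = w1 @ w2" "w1 \<noteq> []" "w2 \<noteq> []" "suffix w1 A" "prefix w2 (deriv rs r)"
    using less.prems by (auto simp: sublist_append)
      (metis append_Nil append_Nil2 prefix_imp_sublist suffix_imp_sublist)
  then show ?case
  proof cases
    case 3
    then obtain A' B' where AB: "deriv rs j = A' @ w @ B'" "A = A' @ w1"
      using dj by (auto simp: suffix_def prefix_def)
    have len: "0 < length w1" "0 < length w2" "length w1 + length w2 = q"
      "length w = q" "length A = length A' + length w1"
      "length (deriv rs j) = length A' + q + length B'"
      using 3 AB assms(2) by auto
    have "q \<le> length (deriv rs j)" using len by simp
    moreover have "sublist w (rstr rs q j)"
      unfolding rstr_def j(2) rule.case Let_def A_def[symmetric]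
      by (rule sublist_substr[OF AB(1)]) (use len in arith)+
    ultimately show ?thesis using j by blast
  qed (use less.IH j A_def in blast)+
qed

lemma sublist_deriv_slp_T:
  "0 < occ rs i \<Longrightarrow> sublist (deriv rs i) (slp_T rs)"
  unfolding occ_def slp_T_def by (rule sublist_deriv_if_occ_in)

lemma qgrams_rstr_eq_qgrams_slp_T:
  assumes "2 \<le> q" "valid_order rs q ord" "\<forall>i < length rs. 0 < occ rs i"
  shows "(\<Union>i \<in> set ord. qgrams q (rstr rs q i)) = qgrams q (slp_T rs)"
proof
  show "(\<Union>i \<in> set ord. qgrams q (rstr rs q i)) \<subseteq> qgrams q (slp_T rs)"
  proof (intro UN_least)
    fix i assume "i \<in> set ord"
    then have "sublist (rstr rs q i) (slp_T rs)"
      using assms(2,3) sublist_rstr_deriv sublist_deriv_slp_T sublist_order.order_trans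
      unfolding valid_order_def by blast
    then show "qgrams q (rstr rs q i) \<subseteq> qgrams q (slp_T rs)"
      using assms(1) by (simp add: qgrams_mono)
  qed
  show "qgrams q (slp_T rs) \<subseteq> (\<Union>i \<in> set ord. qgrams q (rstr rs q i))"
  proof
    fix w assume "w \<in> qgrams q (slp_T rs)"
    then have "length w = q" "sublist w (deriv rs (length rs - 1))"
      using assms(1) by (simp_all add: mem_qgrams_iff slp_T_def)
    then obtain i where "i \<in> set ord" "sublist w (rstr rs q i)"
      using qgram_sublist_rstr[of w rs _ q] assms(1,2) unfolding valid_order_def by blast
    then show "w \<in> (\<Union>i \<in> set ord. qgrams q (rstr rs q i))"
      using assms(1) \<open>length w = q\<close> by (auto simp: mem_qgrams_iff)
  qed
qed

section \<open>The graph G\<close>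

text \<open>Edge counters do not influence the shape of C, so only the labels are kept.\<close>
definition edge_labels :: "('k \<Rightarrow> ('a \<times> nat) option) \<Rightarrow> ('k \<times> 'a) set" where
  "edge_labels E = {(k, c). \<exists>m. E k = Some (c, m)}"

definition qgram_key :: "('a list \<Rightarrow> 'f) \<Rightarrow> 'a list \<Rightarrow> 'f \<times> 'f" where
  "qgram_key \<phi> w = (\<phi> (butlast w), \<phi> (tl w))"

definition qgram_edge :: "('a list \<Rightarrow> 'f) \<Rightarrow> 'a list \<Rightarrow> ('f \<times> 'f) \<times> 'a" where
  "qgram_edge \<phi> w = (qgram_key \<phi> w, last w)"

lemma foldl_subset_UN:
  assumes "\<And>G x. x \<in> set xs \<Longrightarrow> F (f G x) \<subseteq> F G \<union> A x"
  shows "F (foldl f G xs) \<subseteq> F G \<union> (\<Union>x \<in> set xs. A x)"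
  using assms
proof (induction xs arbitrary: G)
  case (Cons x xs)
  have "F (foldl f (f G x) xs) \<subseteq> F (f G x) \<union> (\<Union>y \<in> set xs. A y)"
    using Cons.IH Cons.prems by simp
  also have "\<dots> \<subseteq> F G \<union> (\<Union>y \<in> set (x # xs). A y)"
    using Cons.prems[of x G] by auto
  finally show ?case by simp
qed simp

lemma UN_subset_foldl:
  assumes "\<And>G x. x \<in> set xs \<Longrightarrow> F G \<union> A x \<subseteq> F (f G x)"
  shows "F G \<union> (\<Union>x \<in> set xs. A x) \<subseteq> F (foldl f G xs)"
  using assms
proof (induction xs arbitrary: G)
  case (Cons x xs)
  have "F G \<union> (\<Union>y \<in> set (x # xs). A y) \<subseteq> F (f G x) \<union> (\<Union>y \<in> set xs. A y)"
    using Cons.prems[of x G] by auto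
  also have "\<dots> \<subseteq> F (foldl f (f G x) xs)"
    using Cons.IH Cons.prems by simp
  finally show ?case by simp
qed simp

lemma snd_add_edge:
  "snd (add_edge G u v c m) =
     (snd G)((u, v) \<mapsto> (case snd G (u, v) of None \<Rightarrow> (c, m) | Some (c', k) \<Rightarrow> (c', k + m)))"
  by (cases G) (simp add: add_edge_def split: option.split)

lemma edge_labels_add_edge:
  "edge_labels (snd (add_edge G u v c m)) \<subseteq> insert ((u, v), c) (edge_labels (snd G))"
  by (cases "snd G (u, v)") (auto simp: edge_labels_def snd_add_edge split: if_splits)

lemma dom_add_edge: "dom (snd (add_edge G u v c m)) = insert (u, v) (dom (snd G))"
  by (auto simp: snd_add_edge)

lemma process_r_window:
  assumes "2 \<le> q" "j \<in> {1..<length r + 2 - q}"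
  shows "((\<phi> (substr r (j - 1) (j + q - 3)), \<phi> (substr r j (j + q - 2))), r ! (j + q - 2))
         = qgram_edge \<phi> (take q (drop (j - 1) r))"
proof -
  define w where "w = take q (drop (j - 1) r)"
  have "length w = q" using assms unfolding w_def by auto
  moreover have "Suc (j + q - 3) - (j - 1) = q - 1" using assms by auto
  then have "substr r (j - 1) (j + q - 3) = take (q - 1) w"
    unfolding w_def substr_def by (simp add: min_def)
  moreover have "substr r j (j + q - 2) = drop 1 w"
    using assms unfolding w_def substr_def by (simp add: drop_take Suc_diff_Suc)
  moreover have "last w = r ! (j + q - 2)"
  proof -
    have "w \<noteq> []" using \<open>length w = q\<close> assms(1) by auto
    then have "last w = drop (j - 1) r ! (q - 1)"
      unfolding last_conv_nth[OF \<open>w \<noteq> []\<close>] \<open>length w = q\<close> unfolding w_def using assms by simp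
    also have "\<dots> = r ! (j - 1 + (q - 1))" by (rule nth_drop) (use assms in auto)
    also have "j - 1 + (q - 1) = j + q - 2" using assms by auto
    finally show ?thesis .
  qed
  ultimately show ?thesis
    unfolding qgram_edge_def qgram_key_def w_def[symmetric]
    by (simp add: butlast_conv_take drop_Suc)
qed

lemma qgrams_conv_windows:
  assumes "2 \<le> q"
  shows "qgrams q r = (\<lambda>j. take q (drop (j - 1) r)) ` {1..<length r + 2 - q}"
proof -
  have "{1..<length r + 2 - q} = Suc ` {i. i + q \<le> length r}"
  proof
    show "{1..<length r + 2 - q} \<subseteq> Suc ` {i. i + q \<le> length r}"
    proof
      fix j assume "j \<in> {1..<length r + 2 - q}"
      then have "j = Suc (j - 1)" "j - 1 + q \<le> length r" using assms by auto
      then show "j \<in> Suc ` {i. i + q \<le> length r}" by blast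
    qed
  qed (use assms in auto)
  then show ?thesis
    using assms by (auto simp: qgrams_conv_take_drop image_image)
qed

lemma edge_labels_process_r:
  assumes "2 \<le> q"
  shows "edge_labels (snd (process_r \<phi> q r m G)) \<subseteq> edge_labels (snd G) \<union> qgram_edge \<phi> ` qgrams q r"
proof -
  have "edge_labels (snd (process_r \<phi> q r m G))
    \<subseteq> edge_labels (snd G) \<union>
      (\<Union>j \<in> set [1..<length r + 2 - q]. {qgram_edge \<phi> (take q (drop (j - 1) r))})"
    unfolding process_r_def
  proof (rule order_trans[OF foldl_subset_UN[where F="\<lambda>G. edge_labels (snd G)"
          and A="\<lambda>j. {qgram_edge \<phi> (take q (drop (j - 1) r))}"]])
    fix G' j assume "j \<in> set [1..<length r + 2 - q]"
    then show "edge_labels (snd (add_edge G' (\<phi> (substr r (j - 1) (j + q - 3)))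
        (\<phi> (substr r j (j + q - 2))) (r ! (j + q - 2)) m))
      \<subseteq> edge_labels (snd G') \<union> {qgram_edge \<phi> (take q (drop (j - 1) r))}"
      using edge_labels_add_edge process_r_window[OF assms, of j r \<phi>]
      by (metis atLeastLessThan_upt insert_is_Un sup_commute)
  qed simp
  then show ?thesis
    by (simp add: qgrams_conv_windows[OF assms] UNION_singleton_eq_range image_image)
qed

lemma dom_process_r:
  assumes "2 \<le> q"
  shows "dom (snd G) \<union> qgram_key \<phi> ` qgrams q r \<subseteq> dom (snd (process_r \<phi> q r m G))"
proof -
  have "dom (snd G) \<union>
      (\<Union>j \<in> set [1..<length r + 2 - q]. {fst (qgram_edge \<phi> (take q (drop (j - 1) r)))})
    \<subseteq> dom (snd (process_r \<phi> q r m G))"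
    unfolding process_r_def
  proof (rule order_trans[OF _ UN_subset_foldl[where F="\<lambda>G. dom (snd G)"
          and A="\<lambda>j. {fst (qgram_edge \<phi> (take q (drop (j - 1) r)))}"]])
    fix G' j assume "j \<in> set [1..<length r + 2 - q]"
    then show "dom (snd G') \<union> {fst (qgram_edge \<phi> (take q (drop (j - 1) r)))}
      \<subseteq> dom (snd (add_edge G' (\<phi> (substr r (j - 1) (j + q - 3)))
        (\<phi> (substr r j (j + q - 2))) (r ! (j + q - 2)) m))"
      using dom_add_edge process_r_window[OF assms, of j r \<phi>]
      by (metis atLeastLessThan_upt fst_conv insert_is_Un sup_commute order_refl)
  qed simp
  then show ?thesis
    by (simp add: qgrams_conv_windows[OF assms] UNION_singleton_eq_range image_image qgram_edge_def)
qed

lemma edge_labels_build_G: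
  assumes "2 \<le> q"
  shows "edge_labels (snd (build_G \<phi> q rs ord))
    \<subseteq> qgram_edge \<phi> ` (\<Union>i \<in> set ord. qgrams q (rstr rs q i))"
  unfolding build_G_def
  by (rule order_trans[OF foldl_subset_UN[where F="\<lambda>G. edge_labels (snd G)"
        and A="\<lambda>i. qgram_edge \<phi> ` qgrams q (rstr rs q i)"]])
     (rule edge_labels_process_r[OF assms], auto simp: edge_labels_def)

lemma dom_build_G:
  assumes "2 \<le> q"
  shows "qgram_key \<phi> ` (\<Union>i \<in> set ord. qgrams q (rstr rs q i)) \<subseteq> dom (snd (build_G \<phi> q rs ord))"
  unfolding build_G_def
  by (rule order_trans[OF _ UN_subset_foldl[where F="\<lambda>G. dom (snd G)"
        and A="\<lambda>i. qgram_key \<phi> ` qgrams q (rstr rs q i)"]])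
     (simp add: image_UN, rule dom_process_r[OF assms])

locale qgram_graph =
  fixes \<phi> :: "'a list \<Rightarrow> 'f" and q :: nat and T :: "'a list"
    and E :: "'f \<times> 'f \<Rightarrow> ('a \<times> nat) option"
  assumes two_le_q: "2 \<le> q"
    and collision_free: "collision_free \<phi> q T"
    and edge_labels_qgrams: "edge_labels E \<subseteq> qgram_edge \<phi> ` qgrams q T"
    and qgram_keys_dom: "qgram_key \<phi> ` qgrams q T \<subseteq> dom E"
begin

lemma fingerprint_eq_iff:
  "u \<in> qgrams (q - 1) T \<Longrightarrow> v \<in> qgrams (q - 1) T \<Longrightarrow> \<phi> u = \<phi> v \<longleftrightarrow> u = v"
  using collision_free unfolding collision_free_def by blast

lemma butlast_tl_mem_qgrams:
  assumes "w \<in> qgrams q T"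
  shows "butlast w \<in> qgrams (q - 1) T" "tl w \<in> qgrams (q - 1) T"
  using butlast_mem_qgrams[of w "q - 1" T] tl_mem_qgrams[of w "q - 1" T] assms two_le_q by simp_all

lemma edge_label_extends:
  assumes "((\<phi> u, y), c) \<in> edge_labels E" "u \<in> qgrams (q - 1) T"
  shows "u @ [c] \<in> qgrams q T" "y = \<phi> (tl (u @ [c]))"
proof -
  obtain w where w: "w \<in> qgrams q T" "\<phi> (butlast w) = \<phi> u" "y = \<phi> (tl w)" "c = last w"
    using assms(1) edge_labels_qgrams by (auto simp: qgram_edge_def qgram_key_def)
  have "butlast w = u"
    using w(2) fingerprint_eq_iff butlast_tl_mem_qgrams(1)[OF w(1)] assms(2) by blast
  moreover have "w \<noteq> []" using w(1) two_le_q by (auto simp: mem_qgrams_iff)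
  ultimately have "w = u @ [c]" using w(4) append_butlast_last_id[of w] by simp
  then show "u @ [c] \<in> qgrams q T" "y = \<phi> (tl (u @ [c]))" using w by simp_all
qed

lemma qgram_eq_if_key_eq:
  assumes "w \<in> qgrams q T" "s \<in> qgrams q T" "qgram_key \<phi> w = qgram_key \<phi> s"
  shows "w = s"
proof -
  have "butlast w = butlast s" "tl w = tl s"
    using assms butlast_tl_mem_qgrams fingerprint_eq_iff unfolding qgram_key_def by blast+
  moreover have "length w = q" "length s = q"
    using assms(1,2) two_le_q by (simp_all add: mem_qgrams_iff)
  then have "tl w \<noteq> []" "tl s \<noteq> []" "w \<noteq> []" "s \<noteq> []"
    using two_le_q by (auto dest!: arg_cong[where f=length])
  ultimately have "last w = last s" by (metis last_tl)
  then show ?thesis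
    using \<open>butlast w = butlast s\<close> \<open>w \<noteq> []\<close> \<open>s \<noteq> []\<close> by (metis append_butlast_last_id)
qed

end

section \<open>Labelled paths\<close>

lemma is_path_mono: "is_path Ed vs s \<Longrightarrow> Ed \<subseteq> Ed' \<Longrightarrow> is_path Ed' vs s"
  unfolding is_path_def by blast

lemma last_path_node: "is_path Ed vs s \<Longrightarrow> last vs = vs ! length s"
  unfolding is_path_def by (metis diff_Suc_1 last_conv_nth list.size(3) nat.distinct(1))

lemma is_path_snoc:
  assumes "is_path Ed vs s" "(last vs, c, v) \<in> Ed"
  shows "is_path Ed (vs @ [v]) (s @ [c])"
  using assms last_path_node[OF assms(1)] unfolding is_path_def
  by (auto simp: nth_append less_Suc_eq)

lemma is_path_tl: "is_path Ed vs s \<Longrightarrow> s \<noteq> [] \<Longrightarrow> is_path Ed (tl vs) (tl s)"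
  unfolding is_path_def by (simp add: nth_tl)

lemma is_path_take: "is_path Ed vs s \<Longrightarrow> k \<le> length s \<Longrightarrow> is_path Ed (take (Suc k) vs) (take k s)"
  unfolding is_path_def by simp

lemma is_path_nodes_increasing:
  assumes "\<And>p c v. (p, c, v) \<in> Ed \<Longrightarrow> p < v" "is_path Ed vs s" "k \<le> length s"
  shows "k \<le> vs ! k"
  using assms(3)
proof (induction k)
  case (Suc k)
  then have "(vs ! k, s ! k, vs ! Suc k) \<in> Ed" using assms(2) unfolding is_path_def by simp
  then have "vs ! k < vs ! Suc k" by (rule assms(1))
  with Suc show ?case by simp
qed simp

lemma is_path_unique:
  assumes parent_unique: "\<And>p c v p' c'. (p, c, v) \<in> Ed \<Longrightarrow> (p', c', v) \<in> Ed \<Longrightarrow> p = p' \<and> c = c'"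
    and "is_path Ed vs s" "is_path Ed vs' s'" "length s = length s'" "last vs = last vs'"
  shows "vs = vs' \<and> s = s'"
  using assms(2-5)
proof (induction s arbitrary: vs vs' s' rule: rev_induct)
  case Nil
  then show ?case unfolding is_path_def by (auto simp: length_Suc_conv)
next
  case (snoc c s)
  obtain s1 c' where s': "s' = s1 @ [c']" using snoc.prems(3) by (cases s' rule: rev_cases) auto
  obtain vs1 v where vs: "vs = vs1 @ [v]" using snoc.prems(1) unfolding is_path_def
    by (cases vs rule: rev_cases) auto
  obtain vs1' v' where vs': "vs' = vs1' @ [v']" using snoc.prems(2) unfolding is_path_def
    by (cases vs' rule: rev_cases) auto
  have P: "is_path Ed vs1 s" "is_path Ed vs1' s1"
    using is_path_take[OF snoc.prems(1), of "length s"]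
      is_path_take[OF snoc.prems(2), of "length s1"] snoc.prems(1,2) vs vs' s' unfolding is_path_def by auto
  have "(last vs1, c, v) \<in> Ed" "(last vs1', c', v') \<in> Ed"
    using snoc.prems(1,2) vs vs' s' last_path_node[OF P(1)] last_path_node[OF P(2)]
    unfolding is_path_def
    by (auto simp: nth_append dest: spec[of _ "length s"] spec[of _ "length s1"])
  then have "last vs1 = last vs1'" "c = c'" using parent_unique snoc.prems(4) vs vs' by auto
  then show ?case using snoc.IH[OF P] snoc.prems(3,4) vs vs' s' by simp
qed

section \<open>The depth-first traversal\<close>

locale dfs_tree_invariant =
  fixes \<phi> :: "'a list \<Rightarrow> 'f" and q :: nat and T :: "'a list"
    and E :: "'f \<times> 'f \<Rightarrow> ('a \<times> nat) option" and S :: "('a, 'f) dfs_state"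
  assumes q_le_tn: "q \<le> tn S"
    and tedge_less: "(p, c, v) \<in> tedges S \<Longrightarrow> p < v \<and> v < tn S"
    and tedge_parent_unique: "(p, c, v) \<in> tedges S \<Longrightarrow> (p', c', v) \<in> tedges S \<Longrightarrow> p = p' \<and> c = c'"
    and vis_less: "vis S x = Some p \<Longrightarrow> p < tn S"
    and vis_inj: "vis S x = Some p \<Longrightarrow> vis S x' = Some p \<Longrightarrow> x = x'"
    and stk_vis: "(x, p) \<in> set (stk S) \<Longrightarrow> vis S x = Some p"
    and expl_vis: "(x, y) \<in> expl S \<Longrightarrow> vis S y \<noteq> None"
    and expl_if_finished:
      "vis S x \<noteq> None \<Longrightarrow> x \<notin> fst ` set (stk S) \<Longrightarrow> E (x, y) \<noteq> None \<Longrightarrow> (x, y) \<in> expl S"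
    and start_vis: "vis S (\<phi> (take (q - 1) T)) \<noteq> None"

text \<open>Tree nodes below q form the initial path spelling T[0:q-2]; every node v \<ge> q was created
  while exploring the graph edge (x, tlab v) from the tree node of x.\<close>
locale dfs_invariant = dfs_tree_invariant +
  assumes vis_path: "vis S x = Some p \<Longrightarrow>
      \<exists>vs u. is_path (tedges S) vs u \<and> last vs = p \<and> u \<in> qgrams (q - 1) T \<and> \<phi> u = x"
    and deep_tedge_expl: "(p, c, v) \<in> tedges S \<Longrightarrow> q \<le> v \<Longrightarrow>
      \<exists>x y. vis S x = Some p \<and> tlab S v = Some y \<and> (x, y) \<in> expl S \<and> ((x, y), c) \<in> edge_labels E"
    and deep_tedge_inj: "(p, c, v) \<in> tedges S \<Longrightarrow> (p, c', v') \<in> tedges S \<Longrightarrow> q \<le> v \<Longrightarrow> q \<le> v' \<Longrightarrow>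
      tlab S v = tlab S v' \<Longrightarrow> v = v'"
    and expl_deep_tedge: "(x, y) \<in> expl S \<Longrightarrow>
      \<exists>p c v. vis S x = Some p \<and> (p, c, v) \<in> tedges S \<and> q \<le> v \<and> ((x, y), c) \<in> edge_labels E"
begin

lemma deep_child_label_unexplored:
  assumes "vis S x = Some p" "(x, y) \<notin> expl S" "(p, c, v) \<in> tedges S" "q \<le> v"
  shows "tlab S v \<noteq> Some y"
proof
  assume "tlab S v = Some y"
  then obtain x' where "vis S x' = Some p" "(x', y) \<in> expl S"
    using deep_tedge_expl[OF assms(3,4)] by auto
  then show False using vis_inj[OF assms(1)] assms(2) by blast
qed

end

context qgram_graph
begin

lemma path_extend_along_edge:
  assumes "is_path Ed vs u" "last vs = p" "u \<in> qgrams (q - 1) T"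
    and "((\<phi> u, y), c) \<in> edge_labels E" "(p, c, v) \<in> Ed"
  shows "\<exists>vs' u'. is_path Ed vs' u' \<and> last vs' = v \<and> u' \<in> qgrams (q - 1) T \<and> \<phi> u' = y"
proof (intro exI conjI)
  show "is_path Ed (tl (vs @ [v])) (tl (u @ [c]))"
    using is_path_tl[OF is_path_snoc[OF assms(1)]] assms(2,5) by simp
  show "last (tl (vs @ [v])) = v"
    using assms(1) unfolding is_path_def by (cases vs) auto
  show "tl (u @ [c]) \<in> qgrams (q - 1) T" "\<phi> (tl (u @ [c])) = y"
    using edge_label_extends[OF assms(4,3)] butlast_tl_mem_qgrams(2) by auto
qed

text \<open>The tree-edge and leaf-edge steps at once: exploring (x, y) from the top of the stack
  always adds a tree child, and when y is unvisited it is also visited and pushed.\<close>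
context
  fixes S S' :: "('a, 'f) dfs_state" and x y tx rest c m vis' stk'
  assumes invariant: "dfs_invariant \<phi> q T E S"
    and stk_S: "stk S = (x, tx) # rest" and edge: "E (x, y) = Some (c, m)"
    and unexplored: "(x, y) \<notin> expl S"
    and vis': "vis' = (if vis S y = None then (vis S)(y \<mapsto> tn S) else vis S)"
    and stk': "stk' = (if vis S y = None then (y, tn S) # stk S else stk S)"
    and S': "S' = S\<lparr> tn := Suc (tn S), tedges := insert (tx, c, tn S) (tedges S),
        tcnt := (tcnt S)(tn S \<mapsto> m), tlab := (tlab S)(tn S \<mapsto> y),
        vis := vis', stk := stk', expl := insert (x, y) (expl S) \<rparr>"
begin

interpretation dfs_invariant \<phi> q T E S by (fact invariant)

lemma explore_fields:
  "tn S' = Suc (tn S)" "tedges S' = insert (tx, c, tn S) (tedges S)" "tlab S' = (tlab S)(tn S \<mapsto> y)"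
  "vis S' = vis'" "stk S' = stk'" "expl S' = insert (x, y) (expl S)"
  by (simp_all add: S')

lemma explore_vis_x: "vis S x = Some tx"
  using stk_vis stk_S by simp

lemma explore_old_child: "(p, c', v) \<in> tedges S \<Longrightarrow> v < tn S"
  using tedge_less by blast

lemma explore_vis'_cases:
  "vis' z = Some p \<Longrightarrow> vis S z = Some p \<or> vis S z = None \<and> z = y \<and> p = tn S"
  using vis' by (auto split: if_splits)

lemma explore_vis'_extends: "vis S z = Some p \<Longrightarrow> vis' z = Some p"
  using vis' by auto

lemma explore_tree_invariant: "dfs_tree_invariant \<phi> q T E S'"
proof (unfold_locales, unfold explore_fields)
  fix p c' v assume "(p, c', v) \<in> insert (tx, c, tn S) (tedges S)"
  then show "p < v \<and> v < Suc (tn S)"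
    using vis_less[OF explore_vis_x] tedge_less[of p c' v] by auto
next
  fix p c1 v p' c2
  assume e: "(p, c1, v) \<in> insert (tx, c, tn S) (tedges S)"
    "(p', c2, v) \<in> insert (tx, c, tn S) (tedges S)"
  show "p = p' \<and> c1 = c2"
  proof (cases "v = tn S")
    case True
    then show ?thesis using e explore_old_child by blast
  next
    case False
    then show ?thesis using e tedge_parent_unique by blast
  qed
next
  fix z p assume "vis' z = Some p"
  then show "p < Suc (tn S)" using explore_vis'_cases vis_less by fastforce
next
  fix z z' p assume "vis' z = Some p" "vis' z' = Some p"
  moreover have "vis S w \<noteq> Some (tn S)" for w using vis_less by blast
  ultimately show "z = z'" using explore_vis'_cases vis_inj by metis
next
  fix z p assume zp: "(z, p) \<in> set stk'"
  show "vis' z = Some p"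
  proof (cases "(z, p) \<in> set (stk S)")
    case True
    then show ?thesis using stk_vis explore_vis'_extends by blast
  next
    case False
    then show ?thesis using zp stk' vis' by (auto split: if_splits)
  qed
next
  fix z y' assume a: "vis' z \<noteq> None" "z \<notin> fst ` set stk'" "E (z, y') \<noteq> None"
  have "set (stk S) \<subseteq> set stk'" using stk' by auto
  then have "z \<notin> fst ` set (stk S)" using a(2) by blast
  moreover have "vis S z \<noteq> None" using a(1,2) explore_vis'_cases stk' by fastforce
  ultimately show "(z, y') \<in> insert (x, y) (expl S)" using expl_if_finished a(3) by blast
qed (use q_le_tn expl_vis start_vis vis' in \<open>auto split: if_splits\<close>)

lemma explore_edge_label: "((x, y), c) \<in> edge_labels E"
  using edge by (simp add: edge_labels_def)

lemma explore_vis_path: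
  assumes "vis S' z = Some p"
  shows "\<exists>vs u. is_path (tedges S') vs u \<and> last vs = p \<and> u \<in> qgrams (q - 1) T \<and> \<phi> u = z"
proof -
  let ?Ed = "tedges S'"
  have "tedges S \<subseteq> ?Ed" "(tx, c, tn S) \<in> ?Ed" by (auto simp: explore_fields)
  consider "vis S z = Some p" | "z = y" "p = tn S"
    using assms explore_vis'_cases unfolding explore_fields by blast
  then show ?thesis
  proof cases
    case 1
    then show ?thesis using vis_path is_path_mono[OF _ \<open>tedges S \<subseteq> ?Ed\<close>] by blast
  next
    case 2
    obtain vs u where "is_path (tedges S) vs u" "last vs = tx" "u \<in> qgrams (q - 1) T" "\<phi> u = x"
      using vis_path[OF explore_vis_x] by blast
    then show ?thesis
      using path_extend_along_edge[OF is_path_mono[OF _ \<open>tedges S \<subseteq> ?Ed\<close>]] explore_edge_label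
        \<open>(tx, c, tn S) \<in> ?Ed\<close> 2 by blast
  qed
qed

lemma explore_deep_tedge_expl:
  assumes "(p, c', v) \<in> tedges S'" "q \<le> v"
  shows "\<exists>x' y'. vis S' x' = Some p \<and> tlab S' v = Some y' \<and> (x', y') \<in> expl S' \<and>
    ((x', y'), c') \<in> edge_labels E"
proof (cases "(p, c', v) = (tx, c, tn S)")
  case True
  then show ?thesis
    using explore_vis_x explore_edge_label explore_vis'_extends by (auto simp: explore_fields)
next
  case False
  then have "(p, c', v) \<in> tedges S" "v \<noteq> tn S"
    using assms(1) explore_old_child by (auto simp: explore_fields)
  then show ?thesis
    using deep_tedge_expl[OF _ assms(2)] explore_vis'_extends by (fastforce simp: explore_fields)
qed

lemma explore_new_child_label_fresh:
  assumes "(p, c1, tn S) \<in> tedges S'" "(p, c2, w) \<in> tedges S" "q \<le> w"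
  shows "tlab S' w \<noteq> tlab S' (tn S)"
proof -
  have "p = tx" using assms(1) explore_old_child by (auto simp: explore_fields)
  then show ?thesis
    using deep_child_label_unexplored[OF explore_vis_x unexplored] assms(2,3)
      explore_old_child[OF assms(2)] by (simp add: explore_fields)
qed

lemma explore_deep_tedge_inj:
  assumes "(p, c1, v) \<in> tedges S'" "(p, c2, v') \<in> tedges S'" "q \<le> v" "q \<le> v'"
    and "tlab S' v = tlab S' v'"
  shows "v = v'"
proof (cases "v = tn S \<or> v' = tn S")
  case True
  then show ?thesis
    using explore_new_child_label_fresh assms unfolding explore_fields
    by (metis insertE prod.inject)
next
  case False
  then show ?thesis using deep_tedge_inj assms by (auto simp: explore_fields)
qed

lemma explore_expl_deep_tedge:
  "(x', y') \<in> expl S' \<Longrightarrow>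
    \<exists>p c' v. vis S' x' = Some p \<and> (p, c', v) \<in> tedges S' \<and> q \<le> v \<and> ((x', y'), c') \<in> edge_labels E"
  using expl_deep_tedge explore_vis'_extends explore_vis_x explore_edge_label q_le_tn
  unfolding explore_fields by blast

lemma explore_invariant: "dfs_invariant \<phi> q T E S'"
  using explore_tree_invariant explore_vis_path explore_deep_tedge_expl explore_deep_tedge_inj
    explore_expl_deep_tedge
  by (intro dfs_invariant.intro dfs_invariant_axioms.intro) blast+

end

end

lemma dfs_invariant_finish:
  assumes "dfs_invariant \<phi> q T E S" "stk S = (x, tx) # rest"
    and "\<forall>y. E (x, y) \<noteq> None \<longrightarrow> (x, y) \<in> expl S"
  shows "dfs_invariant \<phi> q T E (S\<lparr> stk := rest \<rparr>)"
proof -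
  interpret dfs_invariant \<phi> q T E S by fact
  have stk_rest: "vis S z = Some p" if "(z, p) \<in> set rest" for z p
    using stk_vis assms(2) that by simp
  have expl_rest: "(z, y) \<in> expl S"
    if "vis S z \<noteq> None" "z \<notin> fst ` set rest" "E (z, y) \<noteq> None" for z y
    using expl_if_finished[OF that(1) _ that(3)] assms(2,3) that(2,3) by (cases "z = x") auto
  have fields: "tn (S\<lparr>stk := rest\<rparr>) = tn S" "tedges (S\<lparr>stk := rest\<rparr>) = tedges S"
    "tlab (S\<lparr>stk := rest\<rparr>) = tlab S" "vis (S\<lparr>stk := rest\<rparr>) = vis S"
    "stk (S\<lparr>stk := rest\<rparr>) = rest" "expl (S\<lparr>stk := rest\<rparr>) = expl S"
    by simp_all
  show ?thesis
    by (unfold_locales; unfold fields)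
       (assumption | rule q_le_tn start_vis stk_rest expl_rest tedge_less tedge_parent_unique
          vis_less vis_inj expl_vis vis_path deep_tedge_expl deep_tedge_inj expl_deep_tedge)+
qed

lemma dfs_invariant_init:
  assumes "2 \<le> q" "q \<le> length T"
  shows "dfs_invariant \<phi> q T E (dfs_init \<phi> q T)"
proof -
  let ?Ed = "{(j - 1, T ! (j - 1), j) | j. 1 \<le> j \<and> j \<le> q - 1}"
  have "is_path ?Ed [0..<q] (take (q - 1) T)"
    unfolding is_path_def using assms by (auto intro!: exI[where x="Suc _"])
  moreover have "take (q - 1) T \<in> qgrams (q - 1) T"
    using assms by (simp add: mem_qgrams_iff)
  moreover have "substr T 0 (q - 2) = take (q - 1) T"
    using assms by (simp add: substr_def Suc_diff_Suc numeral_2_eq_2)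
  ultimately show ?thesis
    using assms unfolding dfs_init_def
    by unfold_locales (auto intro!: exI[of _ "[0..<q]"] split: if_splits)
qed

context qgram_graph
begin

lemma dfs_invariant_step:
  assumes "dfs_step E S S'" "dfs_invariant \<phi> q T E S"
  shows "dfs_invariant \<phi> q T E S'"
  using assms(1)
proof cases
  case (tree_edge x tx rest y c m)
  then show ?thesis
    by (intro explore_invariant[OF assms(2), where x=x and tx=tx and rest=rest and y=y
          and c=c and m=m]) auto
next
  case (leaf_edge x tx rest y c m)
  then show ?thesis
    by (intro explore_invariant[OF assms(2), where x=x and tx=tx and rest=rest and y=y
          and c=c and m=m and vis'="vis S" and stk'="stk S"]) auto
next
  case (finish x tx rest)
  then show ?thesis using dfs_invariant_finish[OF assms(2)] by blast
qed

lemma dfs_invariant_rtranclp: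
  "(dfs_step E)\<^sup>*\<^sup>* S0 S \<Longrightarrow> dfs_invariant \<phi> q T E S0 \<Longrightarrow> dfs_invariant \<phi> q T E S"
  by (induction rule: rtranclp_induct) (auto intro: dfs_invariant_step)

end

locale dfs_on_qgram_graph = qgram_graph \<phi> q T E + dfs_invariant \<phi> q T E S
  for \<phi> :: "'a list \<Rightarrow> 'f" and q T E and S :: "('a, 'f) dfs_state"
begin

lemma qgram_path_if_key_explored:
  assumes "s \<in> qgrams q T" "qgram_key \<phi> s \<in> expl S"
  shows "\<exists>vs. is_path (tedges S) vs s"
proof -
  obtain p c v where e: "vis S (\<phi> (butlast s)) = Some p" "(p, c, v) \<in> tedges S"
      "(qgram_key \<phi> s, c) \<in> edge_labels E"
    using expl_deep_tedge assms(2) unfolding qgram_key_def by blast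
  obtain vs u where P: "is_path (tedges S) vs u" "last vs = p" "u \<in> qgrams (q - 1) T"
      "\<phi> u = \<phi> (butlast s)"
    using vis_path[OF e(1)] by blast
  have "u = butlast s"
    using fingerprint_eq_iff P(3,4) butlast_tl_mem_qgrams(1)[OF assms(1)] by blast
  have "((\<phi> u, \<phi> (tl s)), c) \<in> edge_labels E" using e(3) P(4) unfolding qgram_key_def by simp
  then have "u @ [c] \<in> qgrams q T" "\<phi> (tl s) = \<phi> (tl (u @ [c]))"
    using edge_label_extends P(3) by blast+
  then have "u @ [c] = s"
    using qgram_eq_if_key_eq assms(1) \<open>u = butlast s\<close> unfolding qgram_key_def by simp
  then show ?thesis using is_path_snoc[OF P(1)] P(2) e(2) by blast
qed

lemma qgram_path_last_edge:
  assumes "s \<in> qgrams q T" "is_path (tedges S) vs s"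
  shows "vis S (\<phi> (butlast s)) = Some (vs ! (q - 1))" "tlab S (vs ! q) = Some (\<phi> (tl s))"
    "(vs ! (q - 1), last s, vs ! q) \<in> tedges S" "q \<le> vs ! q"
proof -
  have len: "length s = q" using assms(1) two_le_q by (simp add: mem_qgrams_iff)
  have "s \<noteq> []" using len two_le_q by auto
  then have snoc: "butlast s @ [last s] = s" and last_s: "last s = s ! (q - 1)"
    using len by (simp, simp add: last_conv_nth)
  have "q - 1 < length s" "Suc (q - 1) = q" using len two_le_q by auto
  then have "(vs ! (q - 1), s ! (q - 1), vs ! Suc (q - 1)) \<in> tedges S"
    using assms(2) unfolding is_path_def by blast
  then show edge: "(vs ! (q - 1), last s, vs ! q) \<in> tedges S"
    using last_s \<open>Suc (q - 1) = q\<close> by simp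
  show deep: "q \<le> vs ! q"
    using is_path_nodes_increasing[OF _ assms(2)] tedge_less len by fastforce
  obtain x' y' where x'y': "vis S x' = Some (vs ! (q - 1))" "tlab S (vs ! q) = Some y'"
      "((x', y'), last s) \<in> edge_labels E"
    using deep_tedge_expl[OF edge deep] by blast
  obtain vs' u' where P: "is_path (tedges S) vs' u'" "last vs' = vs ! (q - 1)"
      "u' \<in> qgrams (q - 1) T" "\<phi> u' = x'"
    using vis_path[OF x'y'(1)] by blast
  have prefix_path: "is_path (tedges S) (take q vs) (butlast s)"
    using is_path_take[OF assms(2), of "q - 1"] len two_le_q by (simp add: butlast_conv_take)
  moreover have "last (take q vs) = vs ! (q - 1)"
    using last_path_node[OF prefix_path] len two_le_q by simp
  moreover have "length u' = q - 1" using P(3) two_le_q by (simp add: mem_qgrams_iff)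
  ultimately have "u' = butlast s"
    using is_path_unique[OF tedge_parent_unique P(1)] P(2) len by fastforce
  then show "vis S (\<phi> (butlast s)) = Some (vs ! (q - 1))" using x'y'(1) P(4) by simp
  have "y' = \<phi> (tl s)"
    using edge_label_extends(2)[of "butlast s" y' "last s"] x'y'(3) P(3,4) \<open>u' = butlast s\<close> snoc
    by simp
  then show "tlab S (vs ! q) = Some (\<phi> (tl s))" using x'y'(2) by simp
qed

lemma qgram_path_unique:
  assumes "s \<in> qgrams q T" "is_path (tedges S) vs s" "is_path (tedges S) vs' s"
  shows "vs = vs'"
proof -
  note e = qgram_path_last_edge[OF assms(1,2)] and e' = qgram_path_last_edge[OF assms(1,3)]
  have "vs ! q = vs' ! q"
    using deep_tedge_inj[OF e(3) _ e(4) e'(4)] e(1,2) e'(1,2,3) by simp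
  moreover have "length s = q" using assms(1) two_le_q by (simp add: mem_qgrams_iff)
  ultimately have "last vs = last vs'"
    using last_path_node assms(2,3) by metis
  then show ?thesis using is_path_unique[OF tedge_parent_unique assms(2,3)] by simp
qed

end

locale finished_dfs = dfs_on_qgram_graph +
  assumes stk_empty: "stk S = []"
begin

lemma windows_visited:
  "i + (q - 1) \<le> length T \<Longrightarrow> vis S (\<phi> (take (q - 1) (drop i T))) \<noteq> None"
proof (induction i)
  case 0
  then show ?case using start_vis by simp
next
  case (Suc i)
  define w where "w = take q (drop i T)"
  have w: "w \<in> qgrams q T"
    using Suc.prems two_le_q unfolding w_def by (auto simp: qgrams_conv_take_drop)
  have "butlast w = take (q - 1) (drop i T)" "tl w = take (q - 1) (drop (Suc i) T)"
    using Suc.prems two_le_q unfolding w_def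
    by (simp_all add: butlast_take tl_take tl_drop drop_Suc)
  moreover have "qgram_key \<phi> w \<in> dom E" using w qgram_keys_dom by blast
  ultimately have "qgram_key \<phi> w \<in> expl S"
    using Suc expl_if_finished stk_empty unfolding qgram_key_def by auto
  then show ?case using expl_vis \<open>tl w = _\<close> unfolding qgram_key_def by metis
qed

lemma qgram_key_explored:
  assumes "s \<in> qgrams q T"
  shows "qgram_key \<phi> s \<in> expl S"
proof -
  obtain i where i: "i + q \<le> length T" "s = take q (drop i T)"
    using assms two_le_q by (auto simp: qgrams_conv_take_drop)
  then have "butlast s = take (q - 1) (drop i T)" by (simp add: butlast_take)
  then have "vis S (\<phi> (butlast s)) \<noteq> None" using windows_visited i(1) by simp
  moreover have "qgram_key \<phi> s \<in> dom E" using assms qgram_keys_dom by blast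
  ultimately show ?thesis using expl_if_finished stk_empty unfolding qgram_key_def by auto
qed

lemma unique_qgram_paths:
  "s \<in> qgrams q T \<Longrightarrow> \<exists>!vs. is_path (tedges S) vs s"
  using qgram_path_if_key_explored qgram_key_explored qgram_path_unique by blast

end

theorem lemma8:
  fixes rs :: "'a rule list" and q :: nat and \<phi> :: "'a list \<Rightarrow> 'f"
    and ord :: "nat list" and C :: "('a, 'f) dfs_state"
  assumes "2 \<le> q"
    and "slp_wf rs"
    and "\<forall>i < length rs. 0 < occ rs i"
    and "q \<le> length (slp_T rs)"
    and "collision_free \<phi> q (slp_T rs)"
    and "valid_order rs q ord"
    and "(dfs_step (snd (build_G \<phi> q rs ord)))\<^sup>*\<^sup>* (dfs_init \<phi> q (slp_T rs)) C"
    and "stk C = []"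
  shows "\<forall>s \<in> qgrams q (slp_T rs). \<exists>!vs. is_path (tedges C) vs s"
proof -
  have "(\<Union>i \<in> set ord. qgrams q (rstr rs q i)) = qgrams q (slp_T rs)"
    using qgrams_rstr_eq_qgrams_slp_T assms(1,6,3) .
  then have G: "qgram_graph \<phi> q (slp_T rs) (snd (build_G \<phi> q rs ord))"
    using assms(1,5) edge_labels_build_G[OF assms(1), where \<phi>=\<phi> and rs=rs and ord=ord]
      dom_build_G[OF assms(1), where \<phi>=\<phi> and rs=rs and ord=ord]
    by unfold_locales simp_all
  have "dfs_invariant \<phi> q (slp_T rs) (snd (build_G \<phi> q rs ord)) C"
    using qgram_graph.dfs_invariant_rtranclp[OF G assms(7) dfs_invariant_init[OF assms(1,4)]] .
  then have "finished_dfs \<phi> q (slp_T rs) (snd (build_G \<phi> q rs ord)) C"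
    using G assms(8) by (simp add: finished_dfs_def finished_dfs_axioms_def dfs_on_qgram_graph_def)
  then show ?thesis using finished_dfs.unique_qgram_paths by blast
qed

end
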